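(* Let $(I,\preccurlyeq)$ be a directed set, let $S(\Lambda^{\preccurlyeq})$ be a direct spectrum over $(I,\preccurlyeq)$ with sets $\lambda_0(i)$, transports $\lambda^{\preccurlyeq}_{ij}$ and Bishop spaces $\mathcal F_i=(\lambda_0(i),F_i)$, let $\mathcal F=(X,F)$ be a Bishop space, and let $\mathcal F\to S(\Lambda^{\preccurlyeq})$ be the direct spectrum over $(I,\preccurlyeq)$ with sets $\mathrm{Mor}(\mathcal F,\mathcal F_i)$, transports $(\lambda^{\preccurlyeq}_{ij})^-:\mathrm{Mor}(\mathcal F,\mathcal F_i)\to\mathrm{Mor}(\mathcal F,\mathcal F_j)$, $\theta\mapsto\lambda^{\preccurlyeq}_{ij}\circ\theta$ (for $i\preccurlyeq j$), and Bishop spaces $\mathcal F\to\mathcal F_i$. Then there is a map $\widehat{\ }:\underset{\to}{\mathrm{Lim}}\,[\mathrm{Mor}(\mathcal F,\mathcal F_i)]\to\mathrm{Mor}(\mathcal F,\underset{\to}{\mathrm{Lim}}\,\mathcal F_i)$ with $\widehat{\ }\in\mathrm{Mor}(\underset{\to}{\mathrm{Lim}}\,(\mathcal F\to\mathcal F_i),\mathcal F\to\underset{\to}{\mathrm{Lim}}\,\mathcal F_i)$.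
   Context: Work in Bishop-style constructive mathematics. A directed set: a set with a reflexive transitive relation respecting equality, any two elements having a common upper bound. A direct family over $(I,\preccurlyeq)$: sets $\lambda_0(i)$ and functions $\lambda^{\preccurlyeq}_{ij}:\lambda_0(i)\to\lambda_0(j)$ for $i\preccurlyeq j$ with $\lambda^{\preccurlyeq}_{ii}=\mathrm{id}$ and $\lambda^{\preccurlyeq}_{ik}=\lambda^{\preccurlyeq}_{jk}\circ\lambda^{\preccurlyeq}_{ij}$. Bishop spaces: a Bishop topology on $X$ is a set $F$ of functions $X\to\mathbb R$ containing constants, closed under addition, composition with functions $\mathbb R\to\mathbb R$ uniformly continuous on every $[-n,n]$, and uniform limits; $\bigvee F_0$ = least Bishop topology containing $F_0$; Bishop morphism $(X,F)\to(Y,G)$: function $h$ with $g\circ h\in F$ for all $g\in G$. Exponential: $\mathcal F\to\mathcal G=(\mathrm{Mor}(\mathcal F,\mathcal G),\bigvee\{\phi_{x,g}:x\in X,g\in G\})$, $\phi_{x,g}(h)=g(h(x))$. A direct spectrum: a direct family with Bishop topologies $F_i$ on each set making all transports Bishop morphisms. Direct limit of a direct spectrum (sets $\lambda_0(i)$, transports $\lambda^{\preccurlyeq}_{ij}$, topologies $F_i$): $\sum^{\preccurlyeq}\lambda_0(i)$ = pairs $(i,x)$ with $(i,x)=(j,y)$ iff there is $k\succcurlyeq i,j$ with $\lambda^{\preccurlyeq}_{ik}(x)=\lambda^{\preccurlyeq}_{jk}(y)$; $\underset{\to}{\mathrm{Lim}}\,\lambda_0(i)$ = classes $\mathrm{eql}_0(i,x)$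 under this equality; $\prod^{\succcurlyeq}F_i$ = dependent $\Theta$ with $\Theta_i\in F_i$ and $\Theta_i=\Theta_j\circ\lambda^{\preccurlyeq}_{ij}$ for $i\preccurlyeq j$; $\underset{\to}{\mathrm{Lim}}\,\mathcal F_i=(\underset{\to}{\mathrm{Lim}}\,\lambda_0(i),\bigvee\{\mathrm{eql}_0f_\Theta:\Theta\in\prod^{\succcurlyeq}F_i\})$ with $\mathrm{eql}_0f_\Theta(\mathrm{eql}_0(i,x))=\Theta_i(x)$. *)

theory Defs
  imports "HOL-Analysis.Analysis"
begin

definition Bu :: "(real \<Rightarrow> real) set" where
  "Bu = {\<phi>. \<forall>n::nat. uniformly_continuous_on {- real n .. real n} \<phi>}"

text \<open>A Bishop topology on the carrier X. Functions are HOL functions, and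
  equality of functions X -> R is extensional equality on X, so F is required
  to respect it.\<close>
definition bishop_top :: "'x set \<Rightarrow> ('x \<Rightarrow> real) set \<Rightarrow> bool" where
  "bishop_top X F \<longleftrightarrow>
     (\<forall>f\<in>F. \<forall>g. (\<forall>x\<in>X. f x = g x) \<longrightarrow> g \<in> F) \<and>
     (\<forall>c. (\<lambda>x. c) \<in> F) \<and>
     (\<forall>f\<in>F. \<forall>g\<in>F. (\<lambda>x. f x + g x) \<in> F) \<and>
     (\<forall>f\<in>F. \<forall>\<phi>\<in>Bu. (\<phi> \<circ> f) \<in> F) \<and>
     (\<forall>fs f. (\<forall>n::nat. fs n \<in> F) \<and>
        (\<forall>e>0. \<exists>N. \<forall>n\<ge>N. \<forall>x\<in>X. \<bar>fs n x - f x\<bar> < e) \<longrightarrow> f \<in> F)"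

definition bishop_gen :: "'x set \<Rightarrow> ('x \<Rightarrow> real) set \<Rightarrow> ('x \<Rightarrow> real) set" where
  "bishop_gen X F0 = \<Inter>{F. bishop_top X F \<and> F0 \<subseteq> F}"

definition bmor :: "'x set \<Rightarrow> ('x \<Rightarrow> real) set \<Rightarrow> 'y set \<Rightarrow> ('y \<Rightarrow> real) set
                    \<Rightarrow> ('x \<Rightarrow> 'y) \<Rightarrow> bool" where
  "bmor X F Y G h \<longleftrightarrow> (\<forall>x\<in>X. h x \<in> Y) \<and> (\<forall>g\<in>G. g \<circ> h \<in> F)"

text \<open>The set Mor(F,G); its elements are taken extensional on X, so that HOL
  equality coincides with the (pointwise) equality of Mor(F,G).\<close>
definition Mor :: "'x set \<Rightarrow> ('x \<Rightarrow> real) set \<Rightarrow> 'y set \<Rightarrow> ('y \<Rightarrow> real) set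
                    \<Rightarrow> ('x \<Rightarrow> 'y) set" where
  "Mor X F Y G = {h. h \<in> extensional X \<and> bmor X F Y G h}"

definition exp_top :: "'x set \<Rightarrow> ('x \<Rightarrow> real) set \<Rightarrow> 'y set \<Rightarrow> ('y \<Rightarrow> real) set
                        \<Rightarrow> (('x \<Rightarrow> 'y) \<Rightarrow> real) set" where
  "exp_top X F Y G = bishop_gen (Mor X F Y G) {(\<lambda>h. g (h x)) | x g. x \<in> X \<and> g \<in> G}"

definition directed :: "'i set \<Rightarrow> ('i \<Rightarrow> 'i \<Rightarrow> bool) \<Rightarrow> bool" where
  "directed I le \<longleftrightarrow>
     (\<forall>i\<in>I. le i i) \<and>
     (\<forall>i\<in>I. \<forall>j\<in>I. \<forall>k\<in>I. le i j \<longrightarrow> le j k \<longrightarrow> le i k) \<and>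
     (\<forall>i\<in>I. \<forall>j\<in>I. \<exists>k\<in>I. le i k \<and> le j k)"

definition direct_family :: "'i set \<Rightarrow> ('i \<Rightarrow> 'i \<Rightarrow> bool) \<Rightarrow> ('i \<Rightarrow> 'a set)
                             \<Rightarrow> ('i \<Rightarrow> 'i \<Rightarrow> 'a \<Rightarrow> 'a) \<Rightarrow> bool" where
  "direct_family I le lam tr \<longleftrightarrow>
     (\<forall>i\<in>I. \<forall>j\<in>I. le i j \<longrightarrow> (\<forall>x\<in>lam i. tr i j x \<in> lam j)) \<and>
     (\<forall>i\<in>I. \<forall>x\<in>lam i. tr i i x = x) \<and>
     (\<forall>i\<in>I. \<forall>j\<in>I. \<forall>k\<in>I. le i j \<longrightarrow> le j k \<longrightarrow>
        (\<forall>x\<in>lam i. tr i k x = tr j k (tr i j x)))"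

definition direct_spectrum :: "'i set \<Rightarrow> ('i \<Rightarrow> 'i \<Rightarrow> bool) \<Rightarrow> ('i \<Rightarrow> 'a set)
        \<Rightarrow> ('i \<Rightarrow> 'i \<Rightarrow> 'a \<Rightarrow> 'a) \<Rightarrow> ('i \<Rightarrow> ('a \<Rightarrow> real) set) \<Rightarrow> bool" where
  "direct_spectrum I le lam tr F \<longleftrightarrow>
     direct_family I le lam tr \<and>
     (\<forall>i\<in>I. bishop_top (lam i) (F i)) \<and>
     (\<forall>i\<in>I. \<forall>j\<in>I. le i j \<longrightarrow> bmor (lam i) (F i) (lam j) (F j) (tr i j))"

definition dl_sigma :: "'i set \<Rightarrow> ('i \<Rightarrow> 'a set) \<Rightarrow> ('i \<times> 'a) set" where
  "dl_sigma I lam = {(i, x). i \<in> I \<and> x \<in> lam i}"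

definition dl_eq :: "'i set \<Rightarrow> ('i \<Rightarrow> 'i \<Rightarrow> bool) \<Rightarrow> ('i \<Rightarrow> 'i \<Rightarrow> 'a \<Rightarrow> 'a)
                     \<Rightarrow> 'i \<times> 'a \<Rightarrow> 'i \<times> 'a \<Rightarrow> bool" where
  "dl_eq I le tr p q \<longleftrightarrow>
     (\<exists>k\<in>I. le (fst p) k \<and> le (fst q) k \<and> tr (fst p) k (snd p) = tr (fst q) k (snd q))"

definition dl_class :: "'i set \<Rightarrow> ('i \<Rightarrow> 'i \<Rightarrow> bool) \<Rightarrow> ('i \<Rightarrow> 'a set)
                        \<Rightarrow> ('i \<Rightarrow> 'i \<Rightarrow> 'a \<Rightarrow> 'a) \<Rightarrow> 'i \<times> 'a \<Rightarrow> ('i \<times> 'a) set" where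
  "dl_class I le lam tr p = {q \<in> dl_sigma I lam. dl_eq I le tr p q}"

definition dl_lim :: "'i set \<Rightarrow> ('i \<Rightarrow> 'i \<Rightarrow> bool) \<Rightarrow> ('i \<Rightarrow> 'a set)
                      \<Rightarrow> ('i \<Rightarrow> 'i \<Rightarrow> 'a \<Rightarrow> 'a) \<Rightarrow> ('i \<times> 'a) set set" where
  "dl_lim I le lam tr = dl_class I le lam tr ` dl_sigma I lam"

definition dl_thetas :: "'i set \<Rightarrow> ('i \<Rightarrow> 'i \<Rightarrow> bool) \<Rightarrow> ('i \<Rightarrow> 'a set)
        \<Rightarrow> ('i \<Rightarrow> 'i \<Rightarrow> 'a \<Rightarrow> 'a) \<Rightarrow> ('i \<Rightarrow> ('a \<Rightarrow> real) set) \<Rightarrow> ('i \<Rightarrow> 'a \<Rightarrow> real) set" where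
  "dl_thetas I le lam tr F =
     {\<Theta>. (\<forall>i\<in>I. \<Theta> i \<in> F i) \<and>
          (\<forall>i\<in>I. \<forall>j\<in>I. le i j \<longrightarrow> (\<forall>x\<in>lam i. \<Theta> i x = \<Theta> j (tr i j x)))}"

definition eql_f :: "('i \<Rightarrow> 'a \<Rightarrow> real) \<Rightarrow> ('i \<times> 'a) set \<Rightarrow> real" where
  "eql_f \<Theta> C = (let p = (SOME p. p \<in> C) in \<Theta> (fst p) (snd p))"

definition dl_top :: "'i set \<Rightarrow> ('i \<Rightarrow> 'i \<Rightarrow> bool) \<Rightarrow> ('i \<Rightarrow> 'a set)
        \<Rightarrow> ('i \<Rightarrow> 'i \<Rightarrow> 'a \<Rightarrow> 'a) \<Rightarrow> ('i \<Rightarrow> ('a \<Rightarrow> real) set) \<Rightarrow> (('i \<times> 'a) set \<Rightarrow> real) set" where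
  "dl_top I le lam tr F =
     bishop_gen (dl_lim I le lam tr) (eql_f ` dl_thetas I le lam tr F)"

definition exp_spec_set :: "'x set \<Rightarrow> ('x \<Rightarrow> real) set \<Rightarrow> ('i \<Rightarrow> 'a set)
        \<Rightarrow> ('i \<Rightarrow> ('a \<Rightarrow> real) set) \<Rightarrow> 'i \<Rightarrow> ('x \<Rightarrow> 'a) set" where
  "exp_spec_set X FX lam F i = Mor X FX (lam i) (F i)"

definition exp_spec_tr :: "'x set \<Rightarrow> ('i \<Rightarrow> 'i \<Rightarrow> 'a \<Rightarrow> 'a)
        \<Rightarrow> 'i \<Rightarrow> 'i \<Rightarrow> ('x \<Rightarrow> 'a) \<Rightarrow> ('x \<Rightarrow> 'a)" where
  "exp_spec_tr X tr i j \<theta> = restrict (tr i j \<circ> \<theta>) X"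

definition exp_spec_top :: "'x set \<Rightarrow> ('x \<Rightarrow> real) set \<Rightarrow> ('i \<Rightarrow> 'a set)
        \<Rightarrow> ('i \<Rightarrow> ('a \<Rightarrow> real) set) \<Rightarrow> 'i \<Rightarrow> (('x \<Rightarrow> 'a) \<Rightarrow> real) set" where
  "exp_spec_top X FX lam F i = exp_top X FX (lam i) (F i)"

end

theory Submission
  imports Defs
begin

text \<open>
  The hat of a class eql(i, \<theta>) of morphisms is the map x \<mapsto> eql(i, \<theta> x); it does not depend
  on the representative, since morphisms identified at some k \<succeq> i, j have pointwise identified
  values. A map into a space whose topology is generated by a set of functions is a morphism
  as soon as its composites with the generators are. Composing a generator eql f_\<Theta> of the
  limit topology with the hat of eql(i, \<theta>) gives \<Theta>_i \<circ> \<theta>, so every hat is a morphism. For a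
  generator h \<mapsto> g (h x) of the exponential topology it remains to see that evaluating the hat
  at x is a morphism, and indeed its composite with eql f_\<Theta> is the generator eql f_\<Theta>' of
  the limit topology on the morphisms, where \<Theta>'_i \<theta> = \<Theta>_i (\<theta> x).
\<close>

lemma bishop_gen_superset: "F0 \<subseteq> bishop_gen Y F0"
  unfolding bishop_gen_def by blast

lemma bishop_gen_least: "bishop_top Y F \<Longrightarrow> F0 \<subseteq> F \<Longrightarrow> bishop_gen Y F0 \<subseteq> F"
  unfolding bishop_gen_def by blast

lemma bishop_top_Inter:
  assumes "\<And>F. F \<in> \<F> \<Longrightarrow> bishop_top Y F"
  shows "bishop_top Y (\<Inter>\<F>)"
  unfolding bishop_top_def
proof (intro conjI ballI allI impI)
  fix fs :: "nat \<Rightarrow> _" and f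
  assume conv: "(\<forall>n. fs n \<in> \<Inter>\<F>) \<and> (\<forall>e>0. \<exists>N. \<forall>n\<ge>N. \<forall>y\<in>Y. \<bar>fs n y - f y\<bar> < e)"
  show "f \<in> \<Inter>\<F>"
  proof
    fix F assume "F \<in> \<F>"
    with assms conv show "f \<in> F"
      unfolding bishop_top_def by blast
  qed
qed (use assms in \<open>unfold bishop_top_def, blast+\<close>)

lemma bishop_top_bishop_gen: "bishop_top Y (bishop_gen Y F0)"
  unfolding bishop_gen_def by (rule bishop_top_Inter) blast

lemma bishop_top_ext: "bishop_top X F \<Longrightarrow> f \<in> F \<Longrightarrow> (\<And>x. x \<in> X \<Longrightarrow> f x = g x) \<Longrightarrow> g \<in> F"
  unfolding bishop_top_def by blast

lemma bishop_top_uniform_limit: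
  "bishop_top X F \<Longrightarrow> \<forall>n::nat. fs n \<in> F \<Longrightarrow>
    \<forall>e>0. \<exists>N. \<forall>n\<ge>N. \<forall>x\<in>X. \<bar>fs n x - f x\<bar> < e \<Longrightarrow> f \<in> F"
  unfolding bishop_top_def by blast

lemma bishop_top_pullback:
  assumes F: "bishop_top X F" and h: "\<And>x. x \<in> X \<Longrightarrow> h x \<in> Y"
  shows "bishop_top Y {g. g \<circ> h \<in> F}"
  unfolding bishop_top_def
proof (intro conjI ballI allI impI; (simp only: mem_Collect_eq)?)
  fix f g assume "f \<circ> h \<in> F" and "\<forall>y\<in>Y. f y = g y"
  then show "g \<circ> h \<in> F"
    using bishop_top_ext[OF F] h by (metis comp_apply)
next
  fix c :: real
  show "(\<lambda>y. c) \<circ> h \<in> F"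
    using F unfolding bishop_top_def comp_def by blast
next
  fix f g assume "f \<circ> h \<in> F" and "g \<circ> h \<in> F"
  then have "(\<lambda>x. (f \<circ> h) x + (g \<circ> h) x) \<in> F"
    using F unfolding bishop_top_def by blast
  then show "(\<lambda>y. f y + g y) \<circ> h \<in> F"
    by (simp add: comp_def)
next
  fix f \<phi> assume "f \<circ> h \<in> F" and "\<phi> \<in> Bu"
  then have "\<phi> \<circ> (f \<circ> h) \<in> F"
    using F unfolding bishop_top_def by blast
  then show "\<phi> \<circ> f \<circ> h \<in> F"
    by (simp add: comp_assoc)
next
  fix fs :: "nat \<Rightarrow> _" and f
  assume "(\<forall>n. fs n \<circ> h \<in> F) \<and> (\<forall>e>0. \<exists>N. \<forall>n\<ge>N. \<forall>y\<in>Y. \<bar>fs n y - f y\<bar> < e)"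
  then have "\<forall>n. fs n \<circ> h \<in> F"
    and "\<forall>e>0. \<exists>N. \<forall>n\<ge>N. \<forall>x\<in>X. \<bar>(fs n \<circ> h) x - (f \<circ> h) x\<bar> < e"
    using h by (auto, meson)
  then show "f \<circ> h \<in> F"
    by (rule bishop_top_uniform_limit[OF F])
qed

lemma bmor_bishop_gen:
  assumes "bishop_top X F" and "\<And>x. x \<in> X \<Longrightarrow> h x \<in> Y" and "\<And>g. g \<in> G0 \<Longrightarrow> g \<circ> h \<in> F"
  shows "bmor X F Y (bishop_gen Y G0) h"
proof -
  have "bishop_gen Y G0 \<subseteq> {g. g \<circ> h \<in> F}"
    using assms by (intro bishop_gen_least bishop_top_pullback) auto
  then show ?thesis
    using assms(2) unfolding bmor_def by blast
qed

lemma Mor_mapsto: "h \<in> Mor X F Y G \<Longrightarrow> x \<in> X \<Longrightarrow> h x \<in> Y"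
  unfolding Mor_def bmor_def by blast

lemma Mor_comp: "h \<in> Mor X F Y G \<Longrightarrow> g \<in> G \<Longrightarrow> g \<circ> h \<in> F"
  unfolding Mor_def bmor_def by blast

lemma directedD_refl: "directed I le \<Longrightarrow> i \<in> I \<Longrightarrow> le i i"
  unfolding directed_def by blast

lemma directedD_trans: "directed I le \<Longrightarrow> i \<in> I \<Longrightarrow> j \<in> I \<Longrightarrow> k \<in> I \<Longrightarrow> le i j \<Longrightarrow> le j k \<Longrightarrow> le i k"
  unfolding directed_def by blast

lemma directedD_upper_bound: "directed I le \<Longrightarrow> i \<in> I \<Longrightarrow> j \<in> I \<Longrightarrow> \<exists>k\<in>I. le i k \<and> le j k"
  unfolding directed_def by blast

lemma direct_familyD_comp:
  "direct_family I le lam tr \<Longrightarrow> i \<in> I \<Longrightarrow> j \<in> I \<Longrightarrow> k \<in> I \<Longrightarrow> le i j \<Longrightarrow> le j k \<Longrightarrow>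
    x \<in> lam i \<Longrightarrow> tr i k x = tr j k (tr i j x)"
  unfolding direct_family_def by blast

lemma dl_eq_sym: "dl_eq I le tr p q \<Longrightarrow> dl_eq I le tr q p"
  unfolding dl_eq_def by metis

lemma dl_eq_trans:
  assumes dir: "directed I le" and fam: "direct_family I le lam tr"
    and i: "i \<in> I" and j: "j \<in> I" and l: "l \<in> I"
    and a: "a \<in> lam i" and b: "b \<in> lam j" and c: "c \<in> lam l"
    and ij: "dl_eq I le tr (i, a) (j, b)" and jl: "dl_eq I le tr (j, b) (l, c)"
  shows "dl_eq I le tr (i, a) (l, c)"
proof -
  obtain k where k: "k \<in> I" "le i k" "le j k" "tr i k a = tr j k b"
    using ij unfolding dl_eq_def by auto
  obtain k' where k': "k' \<in> I" "le j k'" "le l k'" "tr j k' b = tr l k' c"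
    using jl unfolding dl_eq_def by auto
  obtain m where m: "m \<in> I" "le k m" "le k' m"
    using directedD_upper_bound[OF dir k(1) k'(1)] by blast
  note comp = direct_familyD_comp[OF fam _ _ m(1)]
  have "tr i m a = tr k m (tr i k a)" using comp[OF i k(1,2) m(2) a] .
  also have "\<dots> = tr j m b" using comp[OF j k(1,3) m(2) b] by (simp add: k(4))
  also have "\<dots> = tr k' m (tr j k' b)" using comp[OF j k'(1,2) m(3) b] .
  also have "\<dots> = tr l m c" using comp[OF l k'(1,3) m(3) c] by (simp add: k'(4))
  finally have "tr i m a = tr l m c" .
  moreover have "le i m" "le l m"
    using directedD_trans[OF dir i k(1) m(1) k(2) m(2)] directedD_trans[OF dir l k'(1) m(1) k'(3) m(3)] .
  ultimately show ?thesis
    using m(1) unfolding dl_eq_def by auto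
qed

lemma dl_class_eq:
  assumes dir: "directed I le" and fam: "direct_family I le lam tr"
    and i: "i \<in> I" "a \<in> lam i" and j: "j \<in> I" "b \<in> lam j"
    and ij: "dl_eq I le tr (i, a) (j, b)"
  shows "dl_class I le lam tr (i, a) = dl_class I le lam tr (j, b)"
proof -
  have "dl_eq I le tr (i, a) (l, c) \<longleftrightarrow> dl_eq I le tr (j, b) (l, c)"
    if "l \<in> I" "c \<in> lam l" for l c
    using dl_eq_trans[OF dir fam i(1) j(1) that(1) i(2) j(2) that(2) ij]
      dl_eq_trans[OF dir fam j(1) i(1) that(1) j(2) i(2) that(2) dl_eq_sym[OF ij]] by blast
  then show ?thesis
    unfolding dl_class_def dl_sigma_def by auto
qed

lemma dl_class_self:
  "directed I le \<Longrightarrow> i \<in> I \<Longrightarrow> a \<in> lam i \<Longrightarrow> (i, a) \<in> dl_class I le lam tr (i, a)"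
  unfolding dl_class_def dl_sigma_def dl_eq_def by (auto intro: directedD_refl)

lemma dl_thetas_respects_dl_eq:
  assumes "\<Theta> \<in> dl_thetas I le lam tr F"
    and "i \<in> I" "a \<in> lam i" "j \<in> I" "b \<in> lam j" and "dl_eq I le tr (i, a) (j, b)"
  shows "\<Theta> i a = \<Theta> j b"
proof -
  obtain k where k: "k \<in> I" "le i k" "le j k" "tr i k a = tr j k b"
    using assms(6) unfolding dl_eq_def by auto
  have "\<Theta> i a = \<Theta> k (tr i k a)" "\<Theta> j b = \<Theta> k (tr j k b)"
    using assms(1-5) k(1-3) unfolding dl_thetas_def by auto
  then show ?thesis
    by (simp add: k(4))
qed

lemma eql_f_dl_class:
  assumes dir: "directed I le" and \<Theta>: "\<Theta> \<in> dl_thetas I le lam tr F"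
    and i: "i \<in> I" and a: "a \<in> lam i"
  shows "eql_f \<Theta> (dl_class I le lam tr (i, a)) = \<Theta> i a"
proof -
  let ?C = "dl_class I le lam tr (i, a)"
  obtain j b where rep: "(SOME p. p \<in> ?C) = (j, b)" by force
  have "(i, a) \<in> ?C"
    using dir i a by (rule dl_class_self)
  then have "(j, b) \<in> ?C"
    using someI[of "\<lambda>p. p \<in> ?C"] rep by simp
  then have "j \<in> I" "b \<in> lam j" "dl_eq I le tr (i, a) (j, b)"
    unfolding dl_class_def dl_sigma_def by auto
  then show ?thesis
    using dl_thetas_respects_dl_eq[OF \<Theta> i a] rep unfolding eql_f_def by simp
qed

lemma bishop_top_dl_top: "bishop_top (dl_lim I le lam tr) (dl_top I le lam tr F)"
  unfolding dl_top_def by (rule bishop_top_bishop_gen)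

lemma dl_thetas_eval:
  assumes x: "x \<in> X" and \<Theta>: "\<Theta> \<in> dl_thetas I le lam tr F"
  shows "(\<lambda>i \<theta>. \<Theta> i (\<theta> x))
    \<in> dl_thetas I le (exp_spec_set X FX lam F) (exp_spec_tr X tr) (exp_spec_top X FX lam F)"
  unfolding dl_thetas_def
proof (intro CollectI conjI ballI impI)
  fix i assume "i \<in> I"
  then have "\<Theta> i \<in> F i"
    using \<Theta> unfolding dl_thetas_def by blast
  then have "(\<lambda>\<theta>. \<Theta> i (\<theta> x)) \<in> {(\<lambda>h. g (h x)) | x g. x \<in> X \<and> g \<in> F i}"
    using x by (intro CollectI exI[of _ x] exI[of _ "\<Theta> i"]) simp
  then show "(\<lambda>\<theta>. \<Theta> i (\<theta> x)) \<in> exp_spec_top X FX lam F i"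
    unfolding exp_spec_top_def exp_top_def by (rule subsetD[OF bishop_gen_superset])
next
  fix i j \<theta> assume ij: "i \<in> I" "j \<in> I" "le i j" and \<theta>: "\<theta> \<in> exp_spec_set X FX lam F i"
  have "\<theta> x \<in> lam i"
    using \<theta> x unfolding exp_spec_set_def by (rule Mor_mapsto)
  then have "\<Theta> i (\<theta> x) = \<Theta> j (tr i j (\<theta> x))"
    using \<Theta> ij unfolding dl_thetas_def by blast
  then show "\<Theta> i (\<theta> x) = \<Theta> j (exp_spec_tr X tr i j \<theta> x)"
    using x unfolding exp_spec_tr_def by simp
qed

locale exp_spectrum =
  fixes I :: "'i set" and le :: "'i \<Rightarrow> 'i \<Rightarrow> bool"
    and lam :: "'i \<Rightarrow> 'a set" and tr :: "'i \<Rightarrow> 'i \<Rightarrow> 'a \<Rightarrow> 'a"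
    and F :: "'i \<Rightarrow> ('a \<Rightarrow> real) set"
    and X :: "'x set" and FX :: "('x \<Rightarrow> real) set"
  assumes directed: "directed I le"
    and family: "direct_family I le lam tr"
    and bishop_X: "bishop_top X FX"
begin

abbreviation "dlim \<equiv> dl_lim I le lam tr"
abbreviation "dlim_top \<equiv> dl_top I le lam tr F"
abbreviation "mor_class \<equiv> dl_class I le (exp_spec_set X FX lam F) (exp_spec_tr X tr)"
abbreviation "mor_dlim \<equiv> dl_lim I le (exp_spec_set X FX lam F) (exp_spec_tr X tr)"
abbreviation "mor_dlim_top \<equiv>
  dl_top I le (exp_spec_set X FX lam F) (exp_spec_tr X tr) (exp_spec_top X FX lam F)"

definition hat :: "('i \<times> ('x \<Rightarrow> 'a)) set \<Rightarrow> 'x \<Rightarrow> ('i \<times> 'a) set" where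
  "hat = (\<lambda>C\<in>mor_dlim. \<lambda>x\<in>X. case SOME p. p \<in> C of (i, \<theta>) \<Rightarrow> dl_class I le lam tr (i, \<theta> x))"

lemma mor_dlimE:
  assumes "C \<in> mor_dlim"
  obtains i \<theta> where "i \<in> I" "\<theta> \<in> Mor X FX (lam i) (F i)" "C = mor_class (i, \<theta>)"
  using assms unfolding dl_lim_def dl_sigma_def exp_spec_set_def by auto

lemma mor_class_in_mor_dlim: "i \<in> I \<Longrightarrow> \<theta> \<in> Mor X FX (lam i) (F i) \<Longrightarrow> mor_class (i, \<theta>) \<in> mor_dlim"
  unfolding dl_lim_def dl_sigma_def exp_spec_set_def by auto

lemma hat_mor_class:
  assumes i: "i \<in> I" and \<theta>: "\<theta> \<in> Mor X FX (lam i) (F i)"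
  shows "hat (mor_class (i, \<theta>)) = (\<lambda>x\<in>X. dl_class I le lam tr (i, \<theta> x))"
proof -
  let ?C = "mor_class (i, \<theta>)"
  obtain j \<phi> where rep: "(SOME p. p \<in> ?C) = (j, \<phi>)" by force
  have "(i, \<theta>) \<in> ?C"
    using directed i \<theta> unfolding exp_spec_set_def by (rule dl_class_self)
  then have "(j, \<phi>) \<in> ?C"
    using someI[of "\<lambda>p. p \<in> ?C"] rep by simp
  then obtain k where j: "j \<in> I" "\<phi> \<in> Mor X FX (lam j) (F j)"
    and k: "k \<in> I" "le i k" "le j k" "exp_spec_tr X tr i k \<theta> = exp_spec_tr X tr j k \<phi>"
    unfolding dl_class_def dl_sigma_def dl_eq_def exp_spec_set_def by auto
  have "dl_class I le lam tr (j, \<phi> x) = dl_class I le lam tr (i, \<theta> x)" if x: "x \<in> X" for x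
  proof (rule dl_class_eq[OF directed family j(1) Mor_mapsto[OF j(2) x] i Mor_mapsto[OF \<theta> x]])
    have "tr j k (\<phi> x) = tr i k (\<theta> x)"
      using fun_cong[OF k(4), of x] x unfolding exp_spec_tr_def by simp
    then show "dl_eq I le tr (j, \<phi> x) (i, \<theta> x)"
      using k(1-3) unfolding dl_eq_def by auto
  qed
  then show ?thesis
    using mor_class_in_mor_dlim[OF i \<theta>] rep unfolding hat_def by (auto intro: restrict_ext)
qed

lemma hat_in_Mor:
  assumes "C \<in> mor_dlim"
  shows "hat C \<in> Mor X FX dlim dlim_top"
proof -
  obtain i \<theta> where i: "i \<in> I" and \<theta>: "\<theta> \<in> Mor X FX (lam i) (F i)" and C: "C = mor_class (i, \<theta>)"
    using assms by (rule mor_dlimE)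
  have hat_C: "hat C = (\<lambda>x\<in>X. dl_class I le lam tr (i, \<theta> x))"
    unfolding C using i \<theta> by (rule hat_mor_class)
  have "bmor X FX dlim dlim_top (hat C)"
    unfolding dl_top_def
  proof (rule bmor_bishop_gen[OF bishop_X])
    show "hat C x \<in> dlim" if "x \<in> X" for x
      using that i Mor_mapsto[OF \<theta>] unfolding hat_C dl_lim_def dl_sigma_def by auto
  next
    fix g assume "g \<in> eql_f ` dl_thetas I le lam tr F"
    then obtain \<Theta> where \<Theta>: "\<Theta> \<in> dl_thetas I le lam tr F" and g: "g = eql_f \<Theta>" by blast
    have "\<Theta> i \<circ> \<theta> \<in> FX"
      using Mor_comp[OF \<theta>] \<Theta> i unfolding dl_thetas_def by blast
    moreover have "(\<Theta> i \<circ> \<theta>) x = (g \<circ> hat C) x" if "x \<in> X" for x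
      using eql_f_dl_class[OF directed \<Theta> i Mor_mapsto[OF \<theta> that]] that unfolding hat_C g by simp
    ultimately show "g \<circ> hat C \<in> FX"
      by (rule bishop_top_ext[OF bishop_X])
  qed
  then show ?thesis
    unfolding Mor_def hat_C by simp
qed

lemma bmor_eval_hat:
  assumes x: "x \<in> X"
  shows "bmor mor_dlim mor_dlim_top dlim dlim_top (\<lambda>C. hat C x)"
  unfolding dl_top_def[of I le lam tr F]
proof (rule bmor_bishop_gen[OF bishop_top_dl_top])
  show "hat C x \<in> dlim" if "C \<in> mor_dlim" for C
    using Mor_mapsto[OF hat_in_Mor[OF that] x] .
next
  fix g assume "g \<in> eql_f ` dl_thetas I le lam tr F"
  then obtain \<Theta> where \<Theta>: "\<Theta> \<in> dl_thetas I le lam tr F" and g: "g = eql_f \<Theta>" by blast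
  let ?\<Theta>x = "\<lambda>i \<theta>. \<Theta> i (\<theta> x)"
  have \<Theta>x: "?\<Theta>x \<in> dl_thetas I le (exp_spec_set X FX lam F) (exp_spec_tr X tr) (exp_spec_top X FX lam F)"
    using x \<Theta> by (rule dl_thetas_eval)
  then have "eql_f ?\<Theta>x \<in> mor_dlim_top"
    unfolding dl_top_def by (rule subsetD[OF bishop_gen_superset imageI])
  moreover have "eql_f ?\<Theta>x C = (g \<circ> (\<lambda>C. hat C x)) C" if C_mem: "C \<in> mor_dlim" for C
  proof -
    obtain i \<theta> where i: "i \<in> I" and \<theta>: "\<theta> \<in> Mor X FX (lam i) (F i)" and C: "C = mor_class (i, \<theta>)"
      using C_mem by (rule mor_dlimE)
    have "eql_f ?\<Theta>x C = \<Theta> i (\<theta> x)"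
      unfolding C using eql_f_dl_class[OF directed \<Theta>x i] \<theta> unfolding exp_spec_set_def by simp
    also have "\<dots> = g (hat C x)"
      using eql_f_dl_class[OF directed \<Theta> i Mor_mapsto[OF \<theta> x]] x
      unfolding g C hat_mor_class[OF i \<theta>] by simp
    finally show ?thesis by simp
  qed
  ultimately show "g \<circ> (\<lambda>C. hat C x) \<in> mor_dlim_top"
    by (rule bishop_top_ext[OF bishop_top_dl_top])
qed

lemma hat_in_Mor_exp_top: "hat \<in> Mor mor_dlim mor_dlim_top (Mor X FX dlim dlim_top) (exp_top X FX dlim dlim_top)"
proof -
  have "bmor mor_dlim mor_dlim_top (Mor X FX dlim dlim_top) (exp_top X FX dlim dlim_top) hat"
    unfolding exp_top_def
  proof (rule bmor_bishop_gen[OF bishop_top_dl_top])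
    show "hat C \<in> Mor X FX dlim dlim_top" if "C \<in> mor_dlim" for C
      using that by (rule hat_in_Mor)
  next
    fix G assume "G \<in> {(\<lambda>h. g (h x)) | x g. x \<in> X \<and> g \<in> dlim_top}"
    then obtain x g where "x \<in> X" "g \<in> dlim_top" "G = (\<lambda>h. g (h x))" by blast
    then show "G \<circ> hat \<in> mor_dlim_top"
      using bmor_eval_hat unfolding bmor_def comp_def by blast
  qed
  then show ?thesis
    unfolding Mor_def hat_def by simp
qed

end

theorem proposition11p6:
  fixes I :: "'i set" and le :: "'i \<Rightarrow> 'i \<Rightarrow> bool"
    and lam :: "'i \<Rightarrow> 'a set" and tr :: "'i \<Rightarrow> 'i \<Rightarrow> 'a \<Rightarrow> 'a"
    and F :: "'i \<Rightarrow> ('a \<Rightarrow> real) set"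
    and X :: "'x set" and FX :: "('x \<Rightarrow> real) set"
  assumes "directed I le"
    and "direct_spectrum I le lam tr F"
    and "bishop_top X FX"
  shows "\<exists>hat.
    hat \<in> Mor (dl_lim I le (exp_spec_set X FX lam F) (exp_spec_tr X tr))
              (dl_top I le (exp_spec_set X FX lam F) (exp_spec_tr X tr) (exp_spec_top X FX lam F))
              (Mor X FX (dl_lim I le lam tr) (dl_top I le lam tr F))
              (exp_top X FX (dl_lim I le lam tr) (dl_top I le lam tr F)) \<and>
    (\<forall>i\<in>I. \<forall>\<theta>\<in>Mor X FX (lam i) (F i).
       hat (dl_class I le (exp_spec_set X FX lam F) (exp_spec_tr X tr) (i, \<theta>))
         = (\<lambda>x\<in>X. dl_class I le lam tr (i, \<theta> x)))"
proof -
  interpret exp_spectrum I le lam tr F X FX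
    using assms unfolding exp_spectrum_def direct_spectrum_def by blast
  show ?thesis
    using hat_in_Mor_exp_top hat_mor_class by blast
qed

end
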